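(* Let $Y$ be a compact metric ANR with metric $d$ and let $A\subseteq Y$ be a $\mathcal{Z}$-set. Equip $A\times[0,1]$ with the metric $\rho((z,s),(z',s'))=\max\{d(z,z'),|s-s'|\}$. Then for every $\epsilon>0$ there exist $\delta'>0$ and a continuous map $F: A\times[0,1]\to Y$ that is a $\delta'$-$\epsilon$-map.
   Context: A closed subset $A$ of an ANR $Y$ is a $\mathcal{Z}$-set if there exists a homotopy $H: Y\times[0,1]\to Y$ with $H_0=\mathrm{id}_Y$ and $H_t(Y)\subseteq Y-A$ for all $t>0$. A map $f:X\to Y$ between metric spaces is a $\delta$-$\epsilon$-map if for every subset $S\subseteq Y$ of diameter $\le\delta$, $f^{-1}(S)$ has diameter $\le\epsilon$. *)

theory Defs
  imports "HOL-Analysis.Analysis"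
begin

text \<open>The test spaces X range over all
  metrizable topologies on the carrier type ('a * (nat => real)), which is large enough
  to contain closed copies of Y in every relevant ambient space (e.g. Y x Hilbert cube).\<close>
definition ANR_space :: "'a topology \<Rightarrow> bool" where
  "ANR_space Y \<longleftrightarrow> metrizable_space Y \<and>
     (\<forall>(X :: ('a \<times> (nat \<Rightarrow> real)) topology) S.
        metrizable_space X \<and> closedin X S \<and> (subtopology X S homeomorphic_space Y) \<longrightarrow>
        (\<exists>U. openin X U \<and> S \<subseteq> U \<and> S retract_of_space (subtopology X U)))"

definition Z_set :: "'a topology \<Rightarrow> 'a set \<Rightarrow> bool" where
  "Z_set Y A \<longleftrightarrow> closedin Y A \<and>
     (\<exists>H. continuous_map (prod_topology Y (top_of_set {0..1::real})) Y H \<and>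
          (\<forall>y\<in>topspace Y. H (y, 0) = y) \<and>
          (\<forall>y\<in>topspace Y. \<forall>t\<in>{0<..1}. H (y, t) \<in> topspace Y - A))"

definition diam_le :: "('a \<Rightarrow> 'a \<Rightarrow> real) \<Rightarrow> 'a set \<Rightarrow> real \<Rightarrow> bool" where
  "diam_le d S r \<longleftrightarrow> (\<forall>x\<in>S. \<forall>y\<in>S. d x y \<le> r)"

definition delta_eps_map ::
  "'a set \<Rightarrow> ('a \<Rightarrow> 'a \<Rightarrow> real) \<Rightarrow> 'b set \<Rightarrow> ('b \<Rightarrow> 'b \<Rightarrow> real) \<Rightarrow> ('a \<Rightarrow> 'b) \<Rightarrow> real \<Rightarrow> real \<Rightarrow> bool" where
  "delta_eps_map X dX Y dY f \<delta> \<epsilon> \<longleftrightarrow>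
     (\<forall>S. S \<subseteq> Y \<and> diam_le dY S \<delta> \<longrightarrow> diam_le dX {x\<in>X. f x \<in> S} \<epsilon>)"

definition max_metric :: "('a \<Rightarrow> 'a \<Rightarrow> real) \<Rightarrow> ('a \<times> real) \<Rightarrow> ('a \<times> real) \<Rightarrow> real" where
  "max_metric d p q = max (d (fst p) (fst q)) \<bar>snd p - snd q\<bar>"

end

theory Submission imports Defs begin

(* Let H be a Z-set homotopy, so g(z,t) = dist(H(z,t), A) vanishes at t = 0 and is positive
   for t > 0.  Compactness of A yields times t_0 > t_1 > ... > 0 and bounds m_n > 0 with
   g >= m_n on A x [t_n, 1] and g < m_n / 2 on A x [0, t_(n+1)].  Reparametrize time by the
   polygonal tau with tau(k/N) = t_k and put F(z,s) = H(z, tau s).  If t_0 is small, F moves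
   points by less than eps/3; and parameters s, s' at least 2/N apart give values of g that
   differ by at least some mu > 0 independent of z.  Since g is 1-Lipschitz in the point
   H(z,t), F-images closer than mu come from parameters closer than 2/N, and images closer
   than eps/3 from points of A closer than eps. *)

lemma mtopology_eq_if_Lipschitz_equivalent:
  assumes "Metric_space M d1" "Metric_space M d2" "C > 0"
    and le12: "\<And>x y. x \<in> M \<Longrightarrow> y \<in> M \<Longrightarrow> d1 x y \<le> d2 x y"
    and le21: "\<And>x y. x \<in> M \<Longrightarrow> y \<in> M \<Longrightarrow> d2 x y \<le> C * d1 x y"
  shows "Metric_space.mtopology M d1 = Metric_space.mtopology M d2"
proof -
  interpret M1: Metric_space M d1 by fact
  interpret M2: Metric_space M d2 by fact
  have "M2.mball x r \<subseteq> M1.mball x r" for x r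
    using le12 by (force simp: M1.mball_def M2.mball_def)
  moreover have "M1.mball x (r / C) \<subseteq> M2.mball x r" for x r
  proof
    fix y assume "y \<in> M1.mball x (r / C)"
    then have "x \<in> M" "y \<in> M" "C * d1 x y < r"
      using \<open>C > 0\<close> by (auto simp: M1.mball_def field_simps)
    then show "y \<in> M2.mball x r"
      using le21[of x y] by (auto simp: M2.mball_def)
  qed
  ultimately have "(\<exists>r>0. M1.mball x r \<subseteq> U) \<longleftrightarrow> (\<exists>r>0. M2.mball x r \<subseteq> U)" for x U
    using \<open>C > 0\<close> by (meson divide_pos_pos order.trans)
  then show ?thesis
    unfolding topology_eq M1.openin_mtopology M2.openin_mtopology by simp
qed

lemma Metric_space_max_metric:
  assumes "Metric_space A d"
  shows "Metric_space (A \<times> {0..1::real}) (max_metric d)"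
proof -
  interpret Metric_space A d by fact
  show ?thesis
  proof
    fix p q r :: "'a \<times> real"
    show "0 \<le> max_metric d p q"
      by (simp add: max_metric_def)
    show "max_metric d p q = max_metric d q p"
      by (simp add: max_metric_def commute abs_minus_commute)
    show "max_metric d p q = 0 \<longleftrightarrow> p = q" if "p \<in> A \<times> {0..1}" "q \<in> A \<times> {0..1}"
      using that unfolding max_metric_def prod_eq_iff
      by (auto simp: max_def) (metis nonneg zero order.antisym)
    assume "p \<in> A \<times> {0..1}" "q \<in> A \<times> {0..1}" "r \<in> A \<times> {0..1}"
    then have "d (fst p) (fst r) \<le> d (fst p) (fst q) + d (fst q) (fst r)"
      by (intro triangle) auto
    then show "max_metric d p r \<le> max_metric d p q + max_metric d q r"
      by (simp add: max_metric_def) linarith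
  qed
qed

lemma mtopology_max_metric:
  assumes "Metric_space Y d" "A \<subseteq> Y"
  shows "Metric_space.mtopology (A \<times> {0..1}) (max_metric d) =
         subtopology (prod_topology (Metric_space.mtopology Y d) euclideanreal) (A \<times> {0..1})"
proof -
  interpret Y: Metric_space Y d by fact
  interpret SA: Submetric Y d A by unfold_locales fact
  interpret SI: Submetric UNIV dist "{0..1::real}" by unfold_locales auto
  interpret P: Metric_space12 A d "{0..1::real}" dist by unfold_locales
  have "Metric_space.mtopology (A \<times> {0..1}) (max_metric d) = P.Prod_metric.mtopology"
  proof (rule mtopology_eq_if_Lipschitz_equivalent)
    show "Metric_space (A \<times> {0..1}) (max_metric d)"
      by (rule Metric_space_max_metric) (rule SA.sub.Metric_space_axioms)
    fix p q :: "'a \<times> real"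
    show "max_metric d p q \<le> prod_dist d dist p q"
      by (simp add: max_metric_def prod_dist_def dist_real_def case_prod_unfold)
    have "prod_dist d dist p q \<le> d (fst p) (fst q) + \<bar>snd p - snd q\<bar>"
      using sqrt_sum_squares_le_sum[OF Y.nonneg abs_ge_zero]
      by (simp add: prod_dist_def dist_real_def case_prod_unfold)
    then show "prod_dist d dist p q \<le> 2 * max_metric d p q"
      by (simp add: max_metric_def max_def)
  qed (use P.prod_metric in auto)
  also have "\<dots> = prod_topology (subtopology Y.mtopology A) (subtopology euclideanreal {0..1})"
    by (simp add: P.mtopology_prod_metric SA.mtopology_submetric SI.mtopology_submetric
        flip: Met_TC.mtopology_def)
  finally show ?thesis
    by (simp add: subtopology_Times)
qed

definition minfdist :: "('a \<Rightarrow> 'a \<Rightarrow> real) \<Rightarrow> 'a set \<Rightarrow> 'a \<Rightarrow> real" where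
  "minfdist d A x = (INF a\<in>A. d x a)"

context Metric_space
begin

lemma minfdist_le: "a \<in> A \<Longrightarrow> minfdist d A x \<le> d x a"
  unfolding minfdist_def by (rule cInf_lower) (auto intro: bdd_belowI[of _ 0])

lemma minfdist_self: "a \<in> A \<Longrightarrow> a \<in> M \<Longrightarrow> minfdist d A a = 0"
  using minfdist_le[of a A a] cInf_greatest[of "(\<lambda>b. d a b) ` A" 0]
  by (force simp: minfdist_def)

lemma minfdist_le_minfdist_add:
  assumes "A \<subseteq> M" "x \<in> M" "y \<in> M"
  shows "minfdist d A x \<le> minfdist d A y + d x y"
proof (cases "A = {}")
  case False
  have "minfdist d A x - d x y \<le> d y a" if "a \<in> A" for a
    using minfdist_le[OF that, of x] triangle[of x y a] assms that by auto
  then have "minfdist d A x - d x y \<le> minfdist d A y"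
    unfolding minfdist_def[of _ _ y] using False by (intro cInf_greatest) auto
  then show ?thesis by simp
qed (simp add: minfdist_def)

lemma minfdist_Lipschitz:
  assumes "A \<subseteq> M" "x \<in> M" "y \<in> M"
  shows "\<bar>minfdist d A x - minfdist d A y\<bar> \<le> d x y"
  using minfdist_le_minfdist_add[OF assms] minfdist_le_minfdist_add[OF assms(1,3,2)] commute[of x y]
  by linarith

lemma minfdist_pos:
  assumes "closedin mtopology A" "A \<noteq> {}" "x \<in> M - A"
  shows "0 < minfdist d A x"
proof -
  obtain r where "r > 0" and r: "mball x r \<subseteq> M - A"
    using assms(1,3) unfolding closedin_def openin_mtopology topspace_mtopology by blast
  have "r \<le> d x a" if "a \<in> A" for a
    using r that assms(1,3) closedin_subset[OF assms(1)] by (force simp: mball_def)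
  then have "r \<le> minfdist d A x"
    unfolding minfdist_def using assms(2) by (intro cInf_greatest) auto
  with \<open>r > 0\<close> show ?thesis by linarith
qed

lemma continuous_map_minfdist:
  assumes "A \<subseteq> M"
  shows "continuous_map mtopology euclideanreal (minfdist d A)"
proof -
  have "continuous_map mtopology Met_TC.mtopology (minfdist d A)"
    unfolding metric_continuous_map[OF Met_TC.Metric_space_axioms]
  proof (intro conjI ballI allI impI)
    fix x and e :: real assume "x \<in> M" "e > 0"
    then show "\<exists>\<delta>>0. \<forall>y. y \<in> M \<and> d x y < \<delta> \<longrightarrow> dist (minfdist d A x) (minfdist d A y) < e"
      using minfdist_Lipschitz[OF assms] by (auto simp: dist_real_def intro: le_less_trans)
  qed auto
  then show ?thesis by (simp flip: Met_TC.mtopology_def)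
qed

end

abbreviation unit_cylinder :: "'a topology \<Rightarrow> 'a set \<Rightarrow> ('a \<times> real) topology" where
  "unit_cylinder X K \<equiv> subtopology (prod_topology X euclideanreal) (K \<times> {0..1})"

lemma compact_space_unit_cylinder: "compactin X K \<Longrightarrow> compact_space (unit_cylinder X K)"
  by (rule compact_space_subtopology) (simp add: compactin_Times)

lemma compact_space_pos_lower_bound:
  assumes "compact_space X" "continuous_map X euclideanreal h" "\<And>p. p \<in> topspace X \<Longrightarrow> 0 < h p"
  shows "\<exists>m>0. \<forall>p\<in>topspace X. m \<le> h p"
proof (cases "topspace X = {}")
  case False
  have "compact (h ` topspace X)"
    using image_compactin[of X _ euclideanreal h] assms(1,2) by (simp add: compact_space_def)
  then obtain p where "p \<in> topspace X" "\<forall>q\<in>topspace X. h p \<le> h q"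
    using compact_attains_inf[of "h ` topspace X"] False by auto
  with assms(3) show ?thesis by blast
qed (auto intro: exI[of _ 1])

lemma unit_cylinder_small_near_base:
  assumes "compactin X K" and h: "continuous_map (unit_cylinder X K) euclideanreal h"
    and base: "\<And>z. z \<in> K \<Longrightarrow> h (z, 0) < c"
  shows "\<exists>r\<in>{0<..1}. \<forall>z\<in>K. \<forall>u\<in>{0..r}. h (z, u) < c"
proof -
  have top: "topspace (unit_cylinder X K) = K \<times> {0..1}"
    using compactin_subset_topspace[OF assms(1)] by auto
  have "\<exists>m>0. \<forall>p\<in>topspace (unit_cylinder X K). m \<le> max (c - h p) (snd p)"
  proof (rule compact_space_pos_lower_bound)
    show "compact_space (unit_cylinder X K)"
      using assms(1) by (rule compact_space_unit_cylinder)
    show "continuous_map (unit_cylinder X K) euclideanreal (\<lambda>p. max (c - h p) (snd p))"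
      by (intro continuous_intros h continuous_map_from_subtopology continuous_map_snd)
    show "0 < max (c - h p) (snd p)" if "p \<in> topspace (unit_cylinder X K)" for p
      using that base unfolding top by (cases "snd p = 0") (auto simp: less_max_iff_disj)
  qed
  then obtain m where "m > 0" and m: "\<And>z u. z \<in> K \<Longrightarrow> u \<in> {0..1} \<Longrightarrow> m \<le> max (c - h (z, u)) u"
    unfolding top by auto
  have "h (z, u) < c" if "z \<in> K" "u \<in> {0..min (m/2) 1}" for z u
    using m[of z u] that \<open>m > 0\<close> by (auto simp: max_def split: if_splits)
  then show ?thesis
    using \<open>m > 0\<close> by (intro bexI[of _ "min (m/2) 1"]) auto
qed

lemma unit_cylinder_lower_bound_off_base:
  assumes "compactin X K" and h: "continuous_map (unit_cylinder X K) euclideanreal h"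
    and "0 \<le> t" and pos: "\<And>z u. z \<in> K \<Longrightarrow> u \<in> {t..1} \<Longrightarrow> 0 < h (z, u)"
  shows "\<exists>m>0. \<forall>z\<in>K. \<forall>u\<in>{t..1}. m \<le> h (z, u)"
proof -
  have top: "topspace (unit_cylinder X K) = K \<times> {0..1}"
    using compactin_subset_topspace[OF assms(1)] by auto
  have "\<exists>m>0. \<forall>p\<in>topspace (unit_cylinder X K). m \<le> max (h p) (t - snd p)"
  proof (rule compact_space_pos_lower_bound)
    show "compact_space (unit_cylinder X K)"
      using assms(1) by (rule compact_space_unit_cylinder)
    show "continuous_map (unit_cylinder X K) euclideanreal (\<lambda>p. max (h p) (t - snd p))"
      by (intro continuous_intros h continuous_map_from_subtopology continuous_map_snd)
    show "0 < max (h p) (t - snd p)" if "p \<in> topspace (unit_cylinder X K)" for p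
      using that pos unfolding top by (cases "t \<le> snd p") (auto simp: less_max_iff_disj)
  qed
  then obtain m where "m > 0" and m: "\<And>z u. z \<in> K \<Longrightarrow> u \<in> {0..1} \<Longrightarrow> m \<le> max (h (z, u)) (t - u)"
    unfolding top by auto
  have "m \<le> h (z, u)" if "z \<in> K" "u \<in> {t..1}" for z u
    using m[of z u] that \<open>0 \<le> t\<close> \<open>m > 0\<close> by (auto simp: max_def split: if_splits)
  with \<open>m > 0\<close> show ?thesis by blast
qed

lemma separating_time_sequence:
  assumes K: "compactin X K" and g: "continuous_map (unit_cylinder X K) euclideanreal g"
    and base: "\<And>z. z \<in> K \<Longrightarrow> g (z, 0) = 0"
    and pos: "\<And>z u. z \<in> K \<Longrightarrow> u \<in> {0<..1} \<Longrightarrow> 0 < g (z, u)"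
    and "0 < t0"
  obtains t m where "\<And>n. 0 < t n" "\<And>n. t n \<le> t0" "\<And>n. t (Suc n) \<le> t n" "\<And>n. 0 < m n"
    "\<And>n z u. z \<in> K \<Longrightarrow> u \<in> {t n..1} \<Longrightarrow> m n \<le> g (z, u)"
    "\<And>n z u. z \<in> K \<Longrightarrow> u \<in> {0..t (Suc n)} \<Longrightarrow> g (z, u) < m n / 2"
proof -
  have "\<exists>\<mu>>0. \<forall>z\<in>K. \<forall>u\<in>{s..1}. \<mu> \<le> g (z, u)" if "0 < s" for s
    using unit_cylinder_lower_bound_off_base[OF K g, of s] pos that by force
  then obtain \<mu> where \<mu>: "\<And>s. 0 < s \<Longrightarrow> 0 < \<mu> s \<and> (\<forall>z\<in>K. \<forall>u\<in>{s..1}. \<mu> s \<le> g (z, u))"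
    by metis
  have "\<exists>t. \<forall>n. (0 < t n \<and> t n \<le> t0) \<and>
          (t (Suc n) \<le> t n \<and> (\<forall>z\<in>K. \<forall>u\<in>{0..t (Suc n)}. g (z, u) < \<mu> (t n) / 2))"
  proof (rule dependent_nat_choice)
    show "\<exists>s. 0 < s \<and> s \<le> t0"
      using \<open>0 < t0\<close> by auto
    fix s assume "0 < s \<and> s \<le> t0"
    moreover obtain r where "r \<in> {0<..1}" "\<forall>z\<in>K. \<forall>u\<in>{0..r}. g (z, u) < \<mu> s / 2"
      using unit_cylinder_small_near_base[OF K g, of "\<mu> s / 2"] base \<mu> calculation by auto
    ultimately show "\<exists>s'. (0 < s' \<and> s' \<le> t0) \<and>
        s' \<le> s \<and> (\<forall>z\<in>K. \<forall>u\<in>{0..s'}. g (z, u) < \<mu> s / 2)"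
      by (intro exI[of _ "min r s"]) auto
  qed
  then obtain t where "\<And>n. 0 < t n \<and> t n \<le> t0"
    "\<And>n. t (Suc n) \<le> t n \<and> (\<forall>z\<in>K. \<forall>u\<in>{0..t (Suc n)}. g (z, u) < \<mu> (t n) / 2)"
    by blast
  with \<mu> show thesis
    by (intro that[of t "\<mu> \<circ> t"]) auto
qed

text \<open>The piecewise linear function with value \<open>t k\<close> at \<open>s = k / N\<close> for \<open>k \<le> N\<close>:
  the \<open>k\<close>-th summand ramps from \<open>t k - t (Suc k)\<close> down to \<open>0\<close> as \<open>s\<close> crosses \<open>[k/N, (k+1)/N]\<close>.\<close>

definition polygonal :: "(nat \<Rightarrow> real) \<Rightarrow> nat \<Rightarrow> real \<Rightarrow> real" where
  "polygonal t N s = t N + (\<Sum>k<N. (t k - t (Suc k)) * max 0 (min 1 (real k + 1 - real N * s)))"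

lemma continuous_on_polygonal: "continuous_on S (polygonal t N)"
  unfolding polygonal_def by (intro continuous_intros)

lemma sum_clamped_steps:
  assumes "real i \<le> x" "x \<le> real i + 1"
  shows "(\<Sum>k<n. (t k - t (Suc k)) * max 0 (min 1 (real k + 1 - x))) =
    (if n \<le> i then 0 else (t i - t (Suc i)) * (real i + 1 - x) + t (Suc i) - t n)"
proof (induction n)
  case (Suc n)
  consider "n < i" | "n = i" | "i < n" by linarith
  then show ?case
    using Suc assms by cases auto
qed simp

lemma polygonal_eq:
  assumes "i < N" "real i \<le> real N * s" "real N * s \<le> real i + 1"
  shows "polygonal t N s = t (Suc i) + (t i - t (Suc i)) * (real i + 1 - real N * s)"
  unfolding polygonal_def sum_clamped_steps[OF assms(2,3)] using assms(1) by simp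

lemma segment_index_exists:
  assumes "0 < N" "s \<in> {0..1}"
  obtains i where "i < N" "real i \<le> real N * s" "real N * s \<le> real i + 1"
proof (cases "s < 1")
  case True
  then have "0 \<le> real N * s" "real N * s < real N"
    using assms by auto
  then show ?thesis
    by (intro that[of "nat \<lfloor>real N * s\<rfloor>"]) linarith+
next
  case False
  then show ?thesis
    using assms by (intro that[of "N - 1"]) (auto simp: of_nat_diff)
qed

context
  fixes t :: "nat \<Rightarrow> real"
  assumes antitone: "\<And>n. t (Suc n) \<le> t n"
begin

lemma polygonal_between:
  assumes "i < N" "real i \<le> real N * s" "real N * s \<le> real i + 1"
  shows "t (Suc i) \<le> polygonal t N s \<and> polygonal t N s \<le> t i"
proof -
  have "0 \<le> (t i - t (Suc i)) * (real i + 1 - real N * s)"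
    using antitone[of i] assms by simp
  moreover have "(t i - t (Suc i)) * (real i + 1 - real N * s) \<le> t i - t (Suc i)"
    using antitone[of i] assms mult_left_mono[of "real i + 1 - real N * s" 1] by simp
  ultimately show ?thesis
    unfolding polygonal_eq[OF assms] by simp
qed

lemma polygonal_range:
  assumes "0 < N" "s \<in> {0..1}"
  shows "t N \<le> polygonal t N s \<and> polygonal t N s \<le> t 0"
proof -
  obtain i where i: "i < N" "real i \<le> real N * s" "real N * s \<le> real i + 1"
    using segment_index_exists[OF assms] .
  have "t N \<le> t (Suc i)" "t i \<le> t 0"
    using i(1) antitone by (auto intro: lift_Suc_antimono_le[of t])
  with polygonal_between[OF i] show ?thesis by simp
qed

lemma polygonal_gap:
  assumes "0 < N" "s \<in> {0..1}" "s' \<in> {0..1}" "s + 2 / real N \<le> s'"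
  obtains i where "Suc i < N" "t (Suc i) \<le> polygonal t N s" "polygonal t N s' \<le> t (Suc (Suc i))"
proof -
  have N_s: "real N * s + 2 \<le> real N * s'"
    using mult_left_mono[OF assms(4), of "real N"] assms(1) by (simp add: distrib_left)
  have "real N * s' \<le> real N"
    using assms(1,3) mult_left_mono[of s' 1 "real N"] by simp
  moreover obtain i where i: "i < N" "real i \<le> real N * s" "real N * s \<le> real i + 1"
    using segment_index_exists[OF assms(1,2)] .
  moreover obtain j where j: "j < N" "real j \<le> real N * s'" "real N * s' \<le> real j + 1"
    using segment_index_exists[OF assms(1,3)] .
  ultimately have "Suc i < N" "Suc i \<le> j"
    using N_s by linarith+
  have "polygonal t N s' \<le> t (Suc (Suc i))"
  proof (cases "Suc (Suc i) \<le> j")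
    case True
    then show ?thesis
      using polygonal_between[OF j] antitone by (meson lift_Suc_antimono_le order.trans)
  next
    case False
    with \<open>Suc i \<le> j\<close> have "j = Suc i" "real N * s' = real j + 1"
      using N_s i j by linarith+
    then show ?thesis
      using polygonal_eq[OF j] by simp
  qed
  with \<open>Suc i < N\<close> polygonal_between[OF i] show thesis
    by (intro that) auto
qed

end

lemma separating_reparametrization:
  assumes K: "compactin X K" and g: "continuous_map (unit_cylinder X K) euclideanreal g"
    and base: "\<And>z. z \<in> K \<Longrightarrow> g (z, 0) = 0"
    and pos: "\<And>z u. z \<in> K \<Longrightarrow> u \<in> {0<..1} \<Longrightarrow> 0 < g (z, u)"
    and "t0 \<in> {0<..1}" "0 < N"
  obtains \<tau> \<mu> where "continuous_on UNIV \<tau>" "0 < \<mu>" "\<And>s. s \<in> {0..1} \<Longrightarrow> \<tau> s \<in> {0<..t0}"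
    "\<And>z z' s s'. z \<in> K \<Longrightarrow> z' \<in> K \<Longrightarrow> s \<in> {0..1} \<Longrightarrow> s' \<in> {0..1} \<Longrightarrow>
       \<bar>g (z, \<tau> s) - g (z', \<tau> s')\<bar> < \<mu> \<Longrightarrow> \<bar>s - s'\<bar> < 2 / real N"
proof -
  obtain t m where t: "\<And>n. 0 < t n" "\<And>n. t n \<le> t0" "\<And>n. t (Suc n) \<le> t n" and "\<And>n. 0 < m n"
    and above: "\<And>n z u. z \<in> K \<Longrightarrow> u \<in> {t n..1} \<Longrightarrow> m n \<le> g (z, u)"
    and below: "\<And>n z u. z \<in> K \<Longrightarrow> u \<in> {0..t (Suc n)} \<Longrightarrow> g (z, u) < m n / 2"
    using separating_time_sequence[OF K g base pos] assms(5) by auto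
  define \<mu> where "\<mu> = Min (m ` {..<N}) / 2"
  have "0 < Min (m ` {..<N})"
    using \<open>0 < N\<close> \<open>\<And>n. 0 < m n\<close> by (subst Min_gr_iff) auto
  then have "0 < \<mu>"
    unfolding \<mu>_def by simp
  have range: "polygonal t N s \<in> {0<..t0}" if "s \<in> {0..1}" for s
    using polygonal_range[of t, OF t(3) \<open>0 < N\<close> that] t(1)[of N] t(2)[of 0] by auto
  have gap: "g (z', polygonal t N s') + \<mu> < g (z, polygonal t N s)"
    if zs: "z \<in> K" "z' \<in> K" "s \<in> {0..1}" "s' \<in> {0..1}" "s + 2 / real N \<le> s'" for z z' s s'
  proof -
    obtain i where "Suc i < N" and i: "t (Suc i) \<le> polygonal t N s" "polygonal t N s' \<le> t (Suc (Suc i))"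
      using polygonal_gap[of t, OF t(3) \<open>0 < N\<close> zs(3-5)] .
    have "m (Suc i) \<le> g (z, polygonal t N s)"
      using above[of z "polygonal t N s"] i range[OF zs(3)] zs(1) assms(5) by auto
    moreover have "g (z', polygonal t N s') < m (Suc i) / 2"
      using below[of z' "polygonal t N s'"] i range[OF zs(4)] zs(2) by auto
    moreover have "2 * \<mu> \<le> m (Suc i)"
      unfolding \<mu>_def using \<open>Suc i < N\<close> by simp
    ultimately show ?thesis
      using \<open>0 < \<mu>\<close> by linarith
  qed
  show thesis
  proof (rule that[of "polygonal t N" \<mu>])
    fix z z' s s'
    assume "z \<in> K" "z' \<in> K" "s \<in> {0..1}" "s' \<in> {0..1}"
      and "\<bar>g (z, polygonal t N s) - g (z', polygonal t N s')\<bar> < \<mu>"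
    then show "\<bar>s - s'\<bar> < 2 / real N"
      using gap[of z z' s s'] gap[of z' z s' s] by fastforce
  qed (use continuous_on_polygonal \<open>0 < \<mu>\<close> range in auto)
qed

lemma continuous_map_reparametrized_homotopy:
  fixes \<tau> :: "real \<Rightarrow> real"
  assumes H: "continuous_map (prod_topology X (top_of_set {0..1})) Y H"
    and \<tau>: "continuous_on UNIV \<tau>" "\<tau> ` {0..1} \<subseteq> {0..1}"
  shows "continuous_map (unit_cylinder X K) Y (\<lambda>(z, s). H (z, \<tau> s))"
proof -
  have "continuous_map (unit_cylinder X K) euclideanreal (\<tau> \<circ> snd)"
    by (rule continuous_map_compose[OF continuous_map_from_subtopology[OF continuous_map_snd]])
      (simp add: \<tau>(1))
  then have "continuous_map (unit_cylinder X K) (top_of_set {0..1}) (\<tau> \<circ> snd)"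
    using \<tau>(2) by (intro continuous_map_into_subtopology) auto
  then have "continuous_map (unit_cylinder X K) (prod_topology X (top_of_set {0..1})) (\<lambda>p. (fst p, \<tau> (snd p)))"
    using continuous_map_from_subtopology[OF continuous_map_fst] by (simp add: o_def continuous_map_paired)
  from continuous_map_compose[OF this H] show ?thesis
    by (simp add: o_def case_prod_unfold)
qed

lemma continuous_map_unit_cylinder:
  "continuous_map (prod_topology X (top_of_set {0..1})) Y H \<Longrightarrow> continuous_map (unit_cylinder X K) Y H"
  using continuous_map_reparametrized_homotopy[of X Y H id] by simp

definition Z_set_homotopy :: "'a topology \<Rightarrow> 'a set \<Rightarrow> ('a \<times> real \<Rightarrow> 'a) \<Rightarrow> bool" where
  "Z_set_homotopy Y A H \<longleftrightarrow>
     continuous_map (prod_topology Y (top_of_set {0..1})) Y H \<and>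
     (\<forall>y\<in>topspace Y. H (y, 0) = y) \<and> (\<forall>y\<in>topspace Y. \<forall>t\<in>{0<..1}. H (y, t) \<in> topspace Y - A)"

lemma Z_set_iff_homotopy: "Z_set Y A \<longleftrightarrow> closedin Y A \<and> (\<exists>H. Z_set_homotopy Y A H)"
  by (simp add: Z_set_def Z_set_homotopy_def)

context Metric_space
begin

lemma delta_eps_map_max_metricI:
  assumes "A \<subseteq> M" "F ` (A \<times> {0..1}) \<subseteq> M" "\<delta> \<le> \<epsilon> / 3"
    and near: "\<And>z s. z \<in> A \<Longrightarrow> s \<in> {0..1} \<Longrightarrow> d z (F (z, s)) \<le> \<epsilon> / 3"
    and sep: "\<And>z z' s s'. z \<in> A \<Longrightarrow> z' \<in> A \<Longrightarrow> s \<in> {0..1} \<Longrightarrow> s' \<in> {0..1} \<Longrightarrow>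
                d (F (z, s)) (F (z', s')) \<le> \<delta> \<Longrightarrow> \<bar>s - s'\<bar> \<le> \<epsilon>"
  shows "delta_eps_map (A \<times> {0..1}) (max_metric d) M d F \<delta> \<epsilon>"
  unfolding delta_eps_map_def diam_le_def
proof (intro allI impI ballI)
  fix S p q
  assume S: "S \<subseteq> M \<and> (\<forall>x\<in>S. \<forall>y\<in>S. d x y \<le> \<delta>)"
    and "p \<in> {x \<in> A \<times> {0..1}. F x \<in> S}" "q \<in> {x \<in> A \<times> {0..1}. F x \<in> S}"
  then obtain z s z' s' where pq: "p = (z, s)" "q = (z', s')" "z \<in> A" "z' \<in> A" "s \<in> {0..1}" "s' \<in> {0..1}"
    and "d (F p) (F q) \<le> \<delta>"
    by auto
  moreover have "d z z' \<le> d z (F p) + d (F p) (F q) + d (F q) z'"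
    using pq assms(1,2) triangle[of z "F p" z'] triangle[of "F p" "F q" z'] by force
  ultimately show "max_metric d p q \<le> \<epsilon>"
    using near[of z s] near[of z' s'] sep[of z z' s s'] commute[of z' "F q"] \<open>\<delta> \<le> \<epsilon> / 3\<close>
    by (simp add: max_metric_def)
qed

lemma homotopy_displacement_small:
  fixes H :: "'a \<times> real \<Rightarrow> 'a"
  assumes K: "compactin mtopology K"
    and H: "continuous_map (prod_topology mtopology (top_of_set {0..1})) mtopology H"
    and H0: "\<And>y. y \<in> M \<Longrightarrow> H (y, 0) = y" and "0 < c"
  obtains r where "r \<in> {0<..1}" "\<And>z u. z \<in> K \<Longrightarrow> u \<in> {0..r} \<Longrightarrow> d z (H (z, u)) < c"
proof -
  have "continuous_map (unit_cylinder mtopology K) euclideanreal (\<lambda>p. mdist (metric (M, d)) (fst p) (H p))"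
    by (intro continuous_map_mdist)
      (simp_all add: continuous_map_unit_cylinder[OF H] continuous_map_from_subtopology continuous_map_fst)
  then show thesis
    using unit_cylinder_small_near_base[OF K, of "\<lambda>p. d (fst p) (H p)" c] that
      H0 compactin_subset_topspace[OF K] \<open>0 < c\<close> by force
qed

lemma minfdist_Z_set_homotopy:
  assumes "closedin mtopology A" and H: "Z_set_homotopy mtopology A H"
  shows "continuous_map (unit_cylinder mtopology A) euclideanreal (\<lambda>p. minfdist d A (H p))"
    and "z \<in> A \<Longrightarrow> minfdist d A (H (z, 0)) = 0"
    and "z \<in> A \<Longrightarrow> u \<in> {0<..1} \<Longrightarrow> 0 < minfdist d A (H (z, u))"
proof -
  have "A \<subseteq> M"
    using closedin_subset[OF assms(1)] by simp
  have "continuous_map (unit_cylinder mtopology A) mtopology H"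
    using H by (simp add: Z_set_homotopy_def continuous_map_unit_cylinder)
  from continuous_map_compose[OF this continuous_map_minfdist[OF \<open>A \<subseteq> M\<close>]]
  show "continuous_map (unit_cylinder mtopology A) euclideanreal (\<lambda>p. minfdist d A (H p))"
    by (simp add: o_def)
  show "z \<in> A \<Longrightarrow> minfdist d A (H (z, 0)) = 0"
    using H \<open>A \<subseteq> M\<close> minfdist_self by (auto simp: Z_set_homotopy_def)
  show "z \<in> A \<Longrightarrow> u \<in> {0<..1} \<Longrightarrow> 0 < minfdist d A (H (z, u))"
    using H \<open>A \<subseteq> M\<close> assms(1) by (force simp: Z_set_homotopy_def intro: minfdist_pos)
qed

lemma Z_set_homotopy_delta_eps_map:
  assumes K: "compactin mtopology A" and H: "Z_set_homotopy mtopology A H" and "0 < \<epsilon>"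
  obtains F \<delta> where "0 < \<delta>" "continuous_map (unit_cylinder mtopology A) mtopology F"
    "F ` (A \<times> {0..1}) \<subseteq> M" "delta_eps_map (A \<times> {0..1}) (max_metric d) M d F \<delta> \<epsilon>"
proof -
  have "closedin mtopology A" "A \<subseteq> M"
    using compactin_imp_closedin[OF Hausdorff_space_mtopology K] compactin_subset_topspace[OF K] by auto
  note g = minfdist_Z_set_homotopy[OF this(1) H]
  obtain r where r: "r \<in> {0<..1}" and near: "\<And>z u. z \<in> A \<Longrightarrow> u \<in> {0..r} \<Longrightarrow> d z (H (z, u)) < \<epsilon> / 3"
    using homotopy_displacement_small[OF K, of H "\<epsilon> / 3"] H \<open>0 < \<epsilon>\<close> by (auto simp: Z_set_homotopy_def)
  obtain N :: nat where "0 < N" "inverse (real N) < \<epsilon> / 2"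
    using ex_inverse_of_nat_less[of "\<epsilon> / 2"] \<open>0 < \<epsilon>\<close> by auto
  then have "2 / real N < \<epsilon>"
    by (simp add: field_simps)
  obtain \<tau> \<mu> where "continuous_on UNIV \<tau>" "0 < \<mu>" and \<tau>: "\<And>s. s \<in> {0..1} \<Longrightarrow> \<tau> s \<in> {0<..r}"
    and sep: "\<And>z z' s s'. z \<in> A \<Longrightarrow> z' \<in> A \<Longrightarrow> s \<in> {0..1} \<Longrightarrow> s' \<in> {0..1} \<Longrightarrow>
        \<bar>minfdist d A (H (z, \<tau> s)) - minfdist d A (H (z', \<tau> s'))\<bar> < \<mu> \<Longrightarrow> \<bar>s - s'\<bar> < 2 / real N"
    using separating_reparametrization[OF K g r \<open>0 < N\<close>] by blast
  have F_in: "H (z, \<tau> s) \<in> M" if "z \<in> A" "s \<in> {0..1}" for z s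
    using H \<tau>[OF that(2)] r that(1) \<open>A \<subseteq> M\<close> by (force simp: Z_set_homotopy_def)
  show thesis
  proof (rule that[of "min (\<epsilon> / 3) (\<mu> / 2)" "\<lambda>(z, s). H (z, \<tau> s)"])
    show "continuous_map (unit_cylinder mtopology A) mtopology (\<lambda>(z, s). H (z, \<tau> s))"
      using H \<tau> r by (intro continuous_map_reparametrized_homotopy \<open>continuous_on UNIV \<tau>\<close>)
        (force simp: Z_set_homotopy_def)+
    show "delta_eps_map (A \<times> {0..1}) (max_metric d) M d (\<lambda>(z, s). H (z, \<tau> s)) (min (\<epsilon> / 3) (\<mu> / 2)) \<epsilon>"
    proof (rule delta_eps_map_max_metricI[OF \<open>A \<subseteq> M\<close>])
      fix z z' s s'
      assume zs: "z \<in> A" "z' \<in> A" "s \<in> {0..1}" "s' \<in> {0..1}"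
        and "d ((\<lambda>(z, s). H (z, \<tau> s)) (z, s)) ((\<lambda>(z, s). H (z, \<tau> s)) (z', s')) \<le> min (\<epsilon> / 3) (\<mu> / 2)"
      then have "\<bar>minfdist d A (H (z, \<tau> s)) - minfdist d A (H (z', \<tau> s'))\<bar> < \<mu>"
        using minfdist_Lipschitz[OF \<open>A \<subseteq> M\<close> F_in F_in] \<open>0 < \<mu>\<close> by fastforce
      then show "\<bar>s - s'\<bar> \<le> \<epsilon>"
        using sep[OF zs] \<open>2 / real N < \<epsilon>\<close> by linarith
    qed (use near \<tau> F_in in \<open>force simp: less_imp_le\<close>)+
  qed (use \<open>0 < \<epsilon>\<close> \<open>0 < \<mu>\<close> F_in in auto)
qed

end

theorem mainTheorem4:
  fixes Y :: "'a set" and d :: "'a \<Rightarrow> 'a \<Rightarrow> real" and A :: "'a set"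
  assumes "Metric_space Y d"
    and "compact_space (Metric_space.mtopology Y d)"
    and "ANR_space (Metric_space.mtopology Y d)"
    and "A \<subseteq> Y"
    and "Z_set (Metric_space.mtopology Y d) A"
  shows "\<forall>\<epsilon>>0. \<exists>\<delta>'>0. \<exists>F.
           continuous_map (Metric_space.mtopology (A \<times> {0..1}) (max_metric d))
                          (Metric_space.mtopology Y d) F \<and>
           F ` (A \<times> {0..1}) \<subseteq> Y \<and>
           delta_eps_map (A \<times> {0..1}) (max_metric d) Y d F \<delta>' \<epsilon>"
proof (intro allI impI)
  fix \<epsilon> :: real assume "0 < \<epsilon>"
  interpret Metric_space Y d by fact
  obtain H where H: "Z_set_homotopy mtopology A H" and "closedin mtopology A"
    using assms(5) by (auto simp: Z_set_iff_homotopy)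
  then have "compactin mtopology A"
    using assms(2) closedin_compact_space by blast
  then obtain F \<delta> where "0 < \<delta>" "continuous_map (unit_cylinder mtopology A) mtopology F"
    "F ` (A \<times> {0..1}) \<subseteq> Y" "delta_eps_map (A \<times> {0..1}) (max_metric d) Y d F \<delta> \<epsilon>"
    using Z_set_homotopy_delta_eps_map H \<open>0 < \<epsilon>\<close> by metis
  then show "\<exists>\<delta>'>0. \<exists>F. continuous_map (Metric_space.mtopology (A \<times> {0..1}) (max_metric d)) mtopology F \<and>
      F ` (A \<times> {0..1}) \<subseteq> Y \<and> delta_eps_map (A \<times> {0..1}) (max_metric d) Y d F \<delta>' \<epsilon>"
    using mtopology_max_metric[OF assms(1,4)] by auto
qed

end
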